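(* For all integers $n\ge0$ and $p\ge1$, $$\mathcal{B}_{n,p}=p!\int_0^1dx_p\int_0^{x_p}dx_{p-1}\cdots\int_0^{x_2}\phi_n(x_1)\,dx_1,$$ i.e. $\mathcal{B}_{n,p}$ equals $p!$ times the $p$-fold iterated integral from $0$ of $\phi_n$, evaluated at $x=1$.
   Context: $S(n,k)$ denotes the Stirling numbers of the second kind and $\phi_n(x)=\sum_{k=0}^nS(n,k)x^k$ are the single-variable Bell (exponential) polynomials. For an integer $p\ge0$, the $p$-Bell numbers $\mathcal{B}_{n,p}$ are defined by $\sum_{n\ge0}\mathcal{B}_{n,p}\frac{z^n}{n!}=\sum_{n\ge0}\binom{n+p}{p}^{-1}\frac{(e^z-1)^n}{n!}$. *)

theory Defs
  imports "HOL-Analysis.Analysis" "HOL-Combinatorics.Stirling"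
    "HOL-Computational_Algebra.Formal_Power_Series"
begin

definition bell_poly :: "nat \<Rightarrow> real \<Rightarrow> real" where
  "bell_poly n x = (\<Sum>k\<le>n. real (Stirling n k) * x ^ k)"

definition pBell_egf :: "nat \<Rightarrow> real fps" where
  "pBell_egf p = (\<Sum>k. fps_const (1 / real ((k + p) choose p)) * (fps_exp 1 - 1) ^ k
                       / fps_const (fact k))"

definition pBell :: "nat \<Rightarrow> nat \<Rightarrow> real" where
  "pBell n p = fact n * fps_nth (pBell_egf p) n"

fun iter_int :: "nat \<Rightarrow> (real \<Rightarrow> real) \<Rightarrow> real \<Rightarrow> real" where
  "iter_int 0 f = f"
| "iter_int (Suc p) f = (\<lambda>x. integral {0..x} (iter_int p f))"

end

theory Submission
  imports Defs
begin

text \<open>Since the coefficient of \<open>z\<^sup>n/n!\<close> in \<open>(e\<^sup>z - 1)\<^sup>k/k!\<close> is \<open>S(n,k)\<close>, the p-Bell number is the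
  finite sum \<open>\<Sum>\<^sub>k S(n,k) p! k!/(k+p)!\<close>. On the other side, integrating \<open>x\<^sup>k\<close> p times from 0
  gives \<open>k! x^(k+p)/(k+p)!\<close>, so \<open>p!\<close> times the p-fold integral of \<open>\<phi>\<^sub>n\<close> at 1 is the same sum.\<close>

lemma fps_nth_exp_minus_one_power:
  "fps_nth ((fps_exp (1::'a::field_char_0) - 1) ^ k) n = fact k * of_nat (Stirling n k) / fact n"
proof (induction n k rule: Stirling.induct)
  case (4 n k)
  define A where "A = fps_exp (1::'a) - 1"
  \<comment> \<open>\<open>A' = A + 1\<close>, so comparing coefficients in \<open>(A^(k+1))'\<close> reproduces the Stirling recurrence.\<close>
  have "fps_deriv (A ^ Suc k) = of_nat (Suc k) * (A + 1) * A ^ k"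
    by (subst fps_deriv_power') (simp add: A_def)
  hence deriv_eq: "fps_deriv (A ^ Suc k) = fps_const (of_nat (Suc k)) * (A ^ Suc k + A ^ k)"
    by (simp only: fps_of_nat) (simp add: algebra_simps)
  have "of_nat (Suc n) * fps_nth (A ^ Suc k) (Suc n) = fps_nth (fps_deriv (A ^ Suc k)) n"
    by (simp only: fps_deriv_nth mult.commute Suc_eq_plus1)
  also have "\<dots> = of_nat (Suc k) * (fps_nth (A ^ Suc k) n + fps_nth (A ^ k) n)"
    by (simp only: deriv_eq fps_mult_left_const_nth fps_add_nth)
  also have "\<dots> = of_nat (Suc k) * (fact (Suc k) * of_nat (Stirling n (Suc k)) / fact n
                                     + fact k * of_nat (Stirling n k) / fact n)"
    using "4.IH" by (simp add: A_def)
  also have "\<dots> = of_nat (Suc n) * (fact (Suc k) * of_nat (Stirling (Suc n) (Suc k)) / fact (Suc n))"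
  proof -
    have "of_nat (Stirling (Suc n) (Suc k))
            = (of_nat (Suc k) * of_nat (Stirling n (Suc k)) + of_nat (Stirling n k) :: 'a)"
      by (simp add: algebra_simps)
    then show ?thesis
      by (simp add: divide_simps del: of_nat_Suc) (simp add: algebra_simps)
  qed
  finally show ?case
    unfolding A_def by (simp only: mult_cancel_left of_nat_eq_0_iff) simp
qed simp_all

lemma sums_fps_of_nth_vanishing:
  fixes g :: "nat \<Rightarrow> 'a::ab_group_add fps"
  assumes "\<And>k m. m < k \<Longrightarrow> fps_nth (g k) m = 0"
  shows "g sums Abs_fps (\<lambda>m. \<Sum>k\<le>m. fps_nth (g k) m)"
  unfolding sums_def
proof (rule tendsto_fpsI)
  fix m
  show "\<forall>\<^sub>F N in sequentially. fps_nth (sum g {..<N}) m = fps_nth (Abs_fps (\<lambda>m. \<Sum>k\<le>m. fps_nth (g k) m)) m"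
    using eventually_ge_at_top[of "Suc m"]
  proof eventually_elim
    case (elim N)
    have "(\<Sum>k<N. fps_nth (g k) m) = (\<Sum>k\<le>m. fps_nth (g k) m)"
      by (rule sum.mono_neutral_right) (use elim assms in auto)
    then show ?case by (simp add: fps_sum_nth)
  qed
qed

lemma pBell_eq_sum_Stirling:
  "pBell n p = (\<Sum>k\<le>n. real (Stirling n k) / real ((k + p) choose p))"
proof -
  define g where "g k = fps_const (1 / real ((k + p) choose p)) * (fps_exp 1 - 1) ^ k
                       / fps_const (fact k :: real)" for k
  have g_nth: "fps_nth (g k) m = real (Stirling m k) / (real ((k + p) choose p) * fact m)" for k m
    unfolding g_def by (simp add: fps_nth_exp_minus_one_power field_simps)
  have "g sums Abs_fps (\<lambda>m. \<Sum>k\<le>m. fps_nth (g k) m)"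
    by (rule sums_fps_of_nth_vanishing) (simp add: g_nth)
  hence "pBell_egf p = Abs_fps (\<lambda>m. \<Sum>k\<le>m. fps_nth (g k) m)"
    unfolding pBell_egf_def g_def[symmetric] by (rule sums_unique[symmetric])
  thus ?thesis
    by (simp add: pBell_def g_nth sum_distrib_left)
qed

lemma has_integral_power_from_0:
  fixes x :: real
  assumes "0 \<le> x"
  shows "((\<lambda>t. t ^ k) has_integral x ^ Suc k / Suc k) {0..x}"
proof -
  have "((\<lambda>t. t ^ k) has_integral x ^ Suc k / Suc k - 0 ^ Suc k / Suc k) {0..x}"
  proof (rule fundamental_theorem_of_calculus)
    fix t :: real
    have "((\<lambda>t. t ^ Suc k / Suc k) has_real_derivative t ^ k) (at t)"
      by (rule derivative_eq_intros refl | simp)+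
    then show "((\<lambda>t. t ^ Suc k / Suc k) has_vector_derivative t ^ k) (at t within {0..x})"
      by (simp add: has_real_derivative_iff_has_vector_derivative has_vector_derivative_at_within)
  qed fact
  thus ?thesis by simp
qed

lemma iter_int_polynomial:
  fixes c :: "nat \<Rightarrow> real" and x :: real
  assumes "finite A" "0 \<le> x"
  shows "iter_int p (\<lambda>t. \<Sum>k\<in>A. c k * t ^ k) x = (\<Sum>k\<in>A. c k * fact k / fact (k + p) * x ^ (k + p))"
  using assms(2)
proof (induction p arbitrary: x)
  case (Suc p)
  have "((\<lambda>t. \<Sum>k\<in>A. c k * fact k / fact (k + p) * t ^ (k + p)) has_integral
          (\<Sum>k\<in>A. c k * fact k / fact (k + p) * (x ^ Suc (k + p) / Suc (k + p)))) {0..x}"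
    by (intro has_integral_sum has_integral_mult_right has_integral_power_from_0 assms Suc.prems)
  hence "integral {0..x} (iter_int p (\<lambda>t. \<Sum>k\<in>A. c k * t ^ k))
           = (\<Sum>k\<in>A. c k * fact k / fact (k + p) * (x ^ Suc (k + p) / Suc (k + p)))"
    by (subst integral_cong[where g = "\<lambda>t. \<Sum>k\<in>A. c k * fact k / fact (k + p) * t ^ (k + p)"])
       (auto simp: Suc.IH intro: integral_unique)
  also have "\<dots> = (\<Sum>k\<in>A. c k * fact k / fact (k + Suc p) * x ^ (k + Suc p))"
    by (intro sum.cong) (simp_all add: field_simps)
  finally show ?case by simp
qed simp

theorem mainTheorem10:
  fixes n p :: nat
  assumes "p \<ge> 1"
  shows "pBell n p = fact p * iter_int p (bell_poly n) 1"
proof -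
  have "real ((k + p) choose p) = fact (k + p) / (fact p * fact k)" for k
    using binomial_fact[of p "k + p", where ?'a = real] by simp
  hence "pBell n p = fact p * (\<Sum>k\<le>n. real (Stirling n k) * fact k / fact (k + p) * 1 ^ (k + p))"
    unfolding pBell_eq_sum_Stirling sum_distrib_left by (intro sum.cong) (simp_all add: field_simps)
  also have "\<dots> = fact p * iter_int p (bell_poly n) 1"
    using iter_int_polynomial[where A = "{..n}" and x = 1 and c = "\<lambda>k. real (Stirling n k)"]
    by (simp add: bell_poly_def[abs_def])
  finally show ?thesis .
qed

end
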